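(* Consider a coalition $\mathcal{S}_l$ (a finite nonempty set of devices) associated with edge server $l$, with parameters $\rho_l>0$, $\xi>0$, $x_l\in\mathbb{R}$, $\alpha_l>0$, a positive integer $K_l$ of edge aggregations, a global aggregation interval $T^{\text{cloud}}>0$, bandwidth $B_l>0$, model size $s>0$, noise power $\sigma^2>0$, and for each device $i\in\mathcal{S}_l$ a transmit power $P_i>0$, channel gain $h_{i,l}>0$, CPU frequency $f_i>0$ and CPU cycles per data unit $C_i>0$. Set $R_i=\frac{B_l}{|\mathcal{S}_l|}\log\!\big(1+\frac{P_ih_{i,l}}{\sigma^2}\big)$ and assume $\frac{s}{R_i}\le \frac{T^{\text{cloud}}}{K_l}$ for all $i\in\mathcal{S}_l$, with strict inequality for at least one $i$. Consider the noncooperative game in which each device $i\in\mathcal{S}_l$ chooses an amount of local training data $D_i\ge 0$ subject to the delay constraint $\frac{D_iC_i}{f_i}+\frac{s}{R_i}\le \frac{T^{\text{cloud}}}{K_l}$, and receives utility $$u_i(D)=\rho_l\xi\sqrt{K_l\sum_{j\in\mathcal{S}_l}D_j}\;\frac{D_i}{\sum_{j\in\mathcal{S}_l}D_j}+x_l-\alpha_l\Big(\sum_{j\in\mathcal{S}_l}R_j\Big)^2$$ (the first term being interpreted as $0$ when $\sum_j D_j=0$). Then the profile $D^*=(D_i^* )_{i\in\mathcal{S}_l}$ with $$D_i^*=\Big(\frac{T^{\text{cloud}}}{K_l}-\frac{s}{R_i}\Big)\frac{f_i}{C_i}=\Big(\frac{T^{\text{cloud}}}{K_l}-\frac{s|\mathcal{S}_l|}{B_l\log(1+\frac{P_ih_{i,l}}{\sigma^2})}\Big)\frac{f_i}{C_i}$$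 is a Nash equilibrium of this game.
   Context: This models the devices of one coalition in hierarchical federated learning: each device is rewarded with a share, proportional to its data contribution, of the coalition's training revenue $\rho_l\xi\sqrt{K_l\sum_j D_j}$, plus a fixed reward $x_l$, minus a congestion cost depending on the coalition's total uplink rate. A Nash equilibrium is a feasible profile from which no device can increase its utility by unilaterally changing its own feasible choice $D_i$. *)

theory Defs
  imports "HOL-Analysis.Analysis"
begin

definition rate :: "'a set \<Rightarrow> real \<Rightarrow> ('a \<Rightarrow> real) \<Rightarrow> ('a \<Rightarrow> real) \<Rightarrow> real \<Rightarrow> 'a \<Rightarrow> real" where
  "rate S B P h \<sigma>2 i = B / real (card S) * ln (1 + P i * h i / \<sigma>2)"

definition feasible :: "real \<Rightarrow> nat \<Rightarrow> real \<Rightarrow> real \<Rightarrow> real \<Rightarrow> real \<Rightarrow> real \<Rightarrow> bool" where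
  "feasible Tc K s R C f d \<longleftrightarrow> 0 \<le> d \<and> d * C / f + s / R \<le> Tc / real K"

definition utility :: "'a set \<Rightarrow> real \<Rightarrow> real \<Rightarrow> real \<Rightarrow> real \<Rightarrow> nat \<Rightarrow> ('a \<Rightarrow> real) \<Rightarrow> ('a \<Rightarrow> real) \<Rightarrow> 'a \<Rightarrow> real" where
  "utility S \<rho> \<xi> x \<alpha> K R D i =
     (let tot = (\<Sum>j\<in>S. D j) in
       (if tot = 0 then 0 else \<rho> * \<xi> * sqrt (real K * tot) * (D i / tot))
       + x - \<alpha> * (\<Sum>j\<in>S. R j)\<^sup>2)"

definition nash_equilibrium ::
  "'a set \<Rightarrow> ('a \<Rightarrow> real \<Rightarrow> bool) \<Rightarrow> (('a \<Rightarrow> real) \<Rightarrow> 'a \<Rightarrow> real) \<Rightarrow> ('a \<Rightarrow> real) \<Rightarrow> bool" where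
  "nash_equilibrium S feas u D \<longleftrightarrow>
     (\<forall>i\<in>S. feas i (D i)) \<and>
     (\<forall>i\<in>S. \<forall>d. feas i d \<longrightarrow> u (D(i := d)) i \<le> u D i)"

end

theory Submission
  imports Defs
begin

text \<open>The congestion cost of device i does not depend on the data profile, and with the other
  devices' total a fixed its revenue is a constant multiple of d / sqrt (d + a), which is
  nondecreasing in its own amount d. The delay constraint is an upper bound d \<le> D*_i, so
  contributing the maximal feasible amount D*_i is a best response to every profile. Besides
  finiteness of S and positivity of \<rho>, \<xi>, f and C, only the nonnegativity of D* is needed.\<close>

lemma divide_sqrt_add_mono:
  fixes a d e :: real
  assumes "0 \<le> a" "0 \<le> d" "d \<le> e" "0 < d + a"
  shows "d / sqrt (d + a) \<le> e / sqrt (e + a)"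
proof -
  have "d / (d + a) \<le> e / (e + a)"
    using assms by (simp add: divide_simps algebra_simps mult_left_mono)
  then have "d * (d / (d + a)) \<le> e * (e / (e + a))"
    using assms by (intro mult_mono) auto
  moreover have root: "y / sqrt (y + a) = sqrt (y * (y / (y + a)))" if "0 \<le> y" for y
    using that by (simp add: real_sqrt_mult real_sqrt_divide)
  ultimately show ?thesis
    using assms by (simp only: root real_sqrt_le_mono order.trans[OF _ assms(3)])
qed

lemma sqrt_revenue_share_mono:
  fixes a c k d e :: real
  assumes "0 \<le> a" "0 \<le> d" "d \<le> e" "0 \<le> c" "0 \<le> k"
  shows "(if d + a = 0 then 0 else c * sqrt (k * (d + a)) * (d / (d + a)))
       \<le> (if e + a = 0 then 0 else c * sqrt (k * (e + a)) * (e / (e + a)))"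
proof (cases "d + a = 0")
  case True
  then show ?thesis
    using assms by auto
next
  case False
  then have pos: "0 < d + a" "0 < e + a"
    using assms by auto
  have share_eq: "c * sqrt (k * t) * (y / t) = c * sqrt k * (y / sqrt t)" if "0 < t" for t y
  proof -
    have "sqrt t * sqrt t = t"
      using that by simp
    then show ?thesis
      using that by (simp add: real_sqrt_mult field_simps)
  qed
  have "c * sqrt k * (d / sqrt (d + a)) \<le> c * sqrt k * (e / sqrt (e + a))"
    using divide_sqrt_add_mono[OF assms(1-3) pos(1)] assms by (intro mult_left_mono) auto
  then show ?thesis
    using pos share_eq[OF pos(1)] share_eq[OF pos(2)] by auto
qed

lemma utility_mono_own_choice:
  assumes "finite S" "i \<in> S" "\<forall>j\<in>S - {i}. 0 \<le> D j"
    and "0 \<le> d" "d \<le> e" "0 \<le> \<rho> * \<xi>"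
  shows "utility S \<rho> \<xi> x \<alpha> K R (D(i := d)) i \<le> utility S \<rho> \<xi> x \<alpha> K R (D(i := e)) i"
proof -
  define a where "a = (\<Sum>j\<in>S - {i}. D j)"
  have "0 \<le> a"
    unfolding a_def using assms(3) by (intro sum_nonneg) auto
  have total: "(\<Sum>j\<in>S. (D(i := y)) j) = y + a" for y
    using assms(1,2) unfolding a_def by (simp add: sum.remove)
  have "(if d + a = 0 then 0 else \<rho> * \<xi> * sqrt (real K * (d + a)) * (d / (d + a)))
      \<le> (if e + a = 0 then 0 else \<rho> * \<xi> * sqrt (real K * (e + a)) * (e / (e + a)))"
    using \<open>0 \<le> a\<close> assms(4-6) by (intro sqrt_revenue_share_mono) auto
  then show ?thesis
    unfolding utility_def Let_def total fun_upd_same by linarith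
qed

lemma feasible_iff_le:
  assumes "0 < C" "0 < f"
  shows "feasible Tc K s R C f d \<longleftrightarrow> 0 \<le> d \<and> d \<le> (Tc / real K - s / R) * f / C"
  using assms by (auto simp: feasible_def field_simps)

theorem theorem1:
  fixes S :: "'a set" and \<rho> \<xi> x \<alpha> Tc B s \<sigma>2 :: real and K :: nat
    and P h f C :: "'a \<Rightarrow> real"
  assumes "finite S" and "S \<noteq> {}"
    and "\<rho> > 0" and "\<xi> > 0" and "\<alpha> > 0" and "K > 0" and "Tc > 0"
    and "B > 0" and "s > 0" and "\<sigma>2 > 0"
    and "\<forall>i\<in>S. P i > 0 \<and> h i > 0 \<and> f i > 0 \<and> C i > 0"
    and "\<forall>i\<in>S. s / rate S B P h \<sigma>2 i \<le> Tc / real K"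
    and "\<exists>i\<in>S. s / rate S B P h \<sigma>2 i < Tc / real K"
  shows "nash_equilibrium S
           (\<lambda>i d. feasible Tc K s (rate S B P h \<sigma>2 i) (C i) (f i) d)
           (utility S \<rho> \<xi> x \<alpha> K (rate S B P h \<sigma>2))
           (\<lambda>i. (Tc / real K - s / rate S B P h \<sigma>2 i) * f i / C i)"
proof -
  define D where "D i = (Tc / real K - s / rate S B P h \<sigma>2 i) * f i / C i" for i
  let ?feas = "\<lambda>i d. feasible Tc K s (rate S B P h \<sigma>2 i) (C i) (f i) d"
  let ?u = "utility S \<rho> \<xi> x \<alpha> K (rate S B P h \<sigma>2)"
  have D_nonneg: "0 \<le> D i" if "i \<in> S" for i
    using assms(11,12) that by (auto simp: D_def)
  have feas_iff: "?feas i d \<longleftrightarrow> 0 \<le> d \<and> d \<le> D i" if "i \<in> S" for i d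
    unfolding D_def using assms(11) that by (intro feasible_iff_le) auto
  have best_response: "?u (D(i := d)) i \<le> ?u D i" if "i \<in> S" "?feas i d" for i d
    using utility_mono_own_choice[OF assms(1) that(1), where D = D and e = "D i"]
      D_nonneg assms(3,4) that by (auto simp: feas_iff)
  show ?thesis
    unfolding nash_equilibrium_def D_def[symmetric] using D_nonneg feas_iff best_response by auto
qed

end
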